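(* Let $X$ be a real Banach space and $f:X\to\mathbb{R}\cup\{+\infty\}$ proper, convex and lsc such that $\mathcal{F}_{\partial f}$ is a singleton. Let $\mathcal{Z} = \mathrm{Im}(Df^* )$, $K = \overline{\mathrm{conv}}(\mathcal{Z})$ and $\mathcal{V} = \overline{\mathrm{conv}}^{w^*}\big(\bigcup_{x\in\mathrm{int}(\mathrm{dom}\, f)}\partial f(x)\big)$. Assume $0\in\mathcal{V}$ and $\mathrm{dom}(Df^* )\neq\varnothing$. Then \[ K\subseteq\mathrm{argmin}\, f\subseteq\mathrm{dom}\, f \quad\text{and}\quad \langle k_1-k_2,v^*\rangle = 0 \ \text{for all } k_1,k_2\in K,\ v^*\in\mathcal{V}. \] Moreover, for every $x\in\mathrm{int}(\mathrm{dom}\, f)$, $x^*\in\partial f(x)$ and $\widehat{x}\in K$, \[ f(x) = \langle x-\widehat{x},x^*\rangle + \min f. \]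
   Context: $f^*: X^*\to\mathbb{R}\cup\{+\infty\}$ is the Fenchel conjugate. $\mathrm{dom}(Df^* )$ denotes the set of points $v^*\in X^*$ at which $f^*$ is Fréchet differentiable; at such points the Fréchet derivative $Df^*(v^* )$ belongs to (the canonical image of) $X$, and $\mathrm{Im}(Df^* )=\{Df^*(v^* ): v^*\in\mathrm{dom}(Df^* )\}\subseteq X$. $\overline{\mathrm{conv}}$ is the norm-closed convex hull and $\overline{\mathrm{conv}}^{w^*}$ the weak$^*$-closed convex hull. For a maximal monotone $A$, $\mathcal{F}_A$ is the set of proper convex lsc $h$ on $X\times X^*$ with $h(x,x^* )\ge\langle x,x^*\rangle$ everywhere and equality on $\mathrm{Gr}(A)$. *)

theory Defs
  imports "HOL-Analysis.Analysis"
begin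

definition ext_proper :: "('a \<Rightarrow> ereal) \<Rightarrow> bool" where
  "ext_proper f \<longleftrightarrow> (\<forall>x. f x \<noteq> -\<infinity>) \<and> (\<exists>x. f x \<noteq> \<infinity>)"

definition ext_convex :: "('a::real_vector \<Rightarrow> ereal) \<Rightarrow> bool" where
  "ext_convex f \<longleftrightarrow> (\<forall>x y t. 0 \<le> t \<and> t \<le> 1 \<longrightarrow>
      f ((1 - t) *\<^sub>R x + t *\<^sub>R y) \<le> ereal (1 - t) * f x + ereal t * f y)"

definition ext_lsc :: "('a::topological_space \<Rightarrow> ereal) \<Rightarrow> bool" where
  "ext_lsc f \<longleftrightarrow> (\<forall>c::real. closed {x. f x \<le> ereal c})"

definition dom_ext :: "('a \<Rightarrow> ereal) \<Rightarrow> 'a set" where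
  "dom_ext f = {x. f x \<noteq> \<infinity>}"

definition subdiff :: "('a::real_normed_vector \<Rightarrow> ereal) \<Rightarrow> 'a \<Rightarrow> ('a \<Rightarrow>\<^sub>L real) set" where
  "subdiff f x = {v. f x \<noteq> \<infinity> \<and> (\<forall>y. f y \<ge> f x + ereal (blinfun_apply v (y - x)))}"

definition graph_subdiff :: "('a::real_normed_vector \<Rightarrow> ereal) \<Rightarrow> ('a \<times> ('a \<Rightarrow>\<^sub>L real)) set" where
  "graph_subdiff f = {(x, v). v \<in> subdiff f x}"

definition fitzpatrick_family ::
  "('a::real_normed_vector \<times> ('a \<Rightarrow>\<^sub>L real)) set \<Rightarrow> ('a \<times> ('a \<Rightarrow>\<^sub>L real) \<Rightarrow> ereal) set" where
  "fitzpatrick_family A = {h. ext_proper h \<and> ext_convex h \<and> ext_lsc h \<and>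
      (\<forall>x v. h (x, v) \<ge> ereal (blinfun_apply v x)) \<and>
      (\<forall>(x, v) \<in> A. h (x, v) = ereal (blinfun_apply v x))}"

definition fenchel :: "('a::real_normed_vector \<Rightarrow> ereal) \<Rightarrow> ('a \<Rightarrow>\<^sub>L real) \<Rightarrow> ereal" where
  "fenchel f v = (SUP x. ereal (blinfun_apply v x) - f x)"

text \<open>g on X* is Frechet differentiable at v with derivative in (the canonical image of) X,
  namely the point x: g is finite near v and its derivative is w \<mapsto> w x.\<close>
definition frechet_grad_at :: "(('a::real_normed_vector \<Rightarrow>\<^sub>L real) \<Rightarrow> ereal) \<Rightarrow> ('a \<Rightarrow>\<^sub>L real) \<Rightarrow> 'a \<Rightarrow> bool" where
  "frechet_grad_at g v x \<longleftrightarrow> (\<exists>e>0. \<forall>w \<in> ball v e. \<bar>g w\<bar> \<noteq> \<infinity>) \<and>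
      ((\<lambda>w. real_of_ereal (g w)) has_derivative (\<lambda>w. blinfun_apply w x)) (at v)"

definition frechet_differentiable_pt :: "(('a::real_normed_vector \<Rightarrow>\<^sub>L real) \<Rightarrow> ereal) \<Rightarrow> ('a \<Rightarrow>\<^sub>L real) \<Rightarrow> bool" where
  "frechet_differentiable_pt g v \<longleftrightarrow>
     (\<exists>e>0. \<forall>w \<in> ball v e. \<bar>g w\<bar> \<noteq> \<infinity>) \<and>
     (\<exists>D. ((\<lambda>w. real_of_ereal (g w)) has_derivative D) (at v))"

definition dom_Dconj :: "('a::real_normed_vector \<Rightarrow> ereal) \<Rightarrow> ('a \<Rightarrow>\<^sub>L real) set" where
  "dom_Dconj f = {v. frechet_differentiable_pt (fenchel f) v}"

definition im_Dconj :: "('a::real_normed_vector \<Rightarrow> ereal) \<Rightarrow> 'a set" where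
  "im_Dconj f = {x. \<exists>v. frechet_grad_at (fenchel f) v x}"

definition weak_star_topology :: "('a::real_normed_vector \<Rightarrow>\<^sub>L real) topology" where
  "weak_star_topology = topology_generated_by
     {{v. blinfun_apply v x \<in> U} | x U. open U}"

definition weak_star_closed_convex_hull :: "('a::real_normed_vector \<Rightarrow>\<^sub>L real) set \<Rightarrow> ('a \<Rightarrow>\<^sub>L real) set" where
  "weak_star_closed_convex_hull S = (\<lambda>T. convex T \<and> closedin weak_star_topology T) hull S"

definition argmin_ext :: "('a \<Rightarrow> ereal) \<Rightarrow> 'a set" where
  "argmin_ext f = {x. \<forall>y. f x \<le> f y}"

end

theory Submission
  imports Defs
begin

(*
  Uniqueness of the Fitzpatrick family of \<partial>f forces each of its members to equal f \<oplus> f*.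
  Comparing with f** \<oplus> f*, with the pointwise maximum of f \<oplus> f* and any affine function lying
  below the duality product on the graph of \<partial>f, and with the Fitzpatrick function \<phi> of \<partial>f yields
  f** = f, maximal monotonicity of \<partial>f and \<phi> = f \<oplus> f*.

  The last identity provides, for x in int(dom f) and any v, pairs (y, u) in the graph of \<partial>f with y
  an almost-maximiser of <v, .> - f and u an almost-subgradient at x. If f* is Frechet differentiable
  at v with gradient z, almost-maximisers are uniformly close to z when tested against bounded
  functionals, and u is bounded because f is bounded above near x (Baire). Hence
  f z \<le> f x + <u, z - x> + \<kappa> for every \<kappa> > 0. Used at a point slightly beyond x0 on the line from
  z through x0, this gives \<partial>f(x0) \<subseteq> \<partial>f(z) for every x0 in int(dom f).

  As subdifferentials are weak* closed and convex, the weak* closed convex hull of the statement lies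
  in \<partial>f(z) for every gradient z of f*. It contains 0, so every such z minimises f; each of its elements
  is then constant on the set of gradients, and all conclusions pass to its closed convex hull K.
*)

section \<open>Convex and lower semicontinuous extended-real functions\<close>

lemma ext_convexI:
  fixes f :: "'a::real_vector \<Rightarrow> ereal"
  assumes "\<And>x. f x \<noteq> -\<infinity>"
    and "\<And>x y t a b. 0 < t \<Longrightarrow> t < 1 \<Longrightarrow> f x = ereal a \<Longrightarrow> f y = ereal b \<Longrightarrow>
          f ((1 - t) *\<^sub>R x + t *\<^sub>R y) \<le> ereal ((1 - t) * a + t * b)"
  shows "ext_convex f"
  unfolding ext_convex_def
proof (intro allI impI)
  fix x y and t :: real
  assume t: "0 \<le> t \<and> t \<le> 1"
  consider (endpoint) "t = 0 \<or> t = 1" | (infinite) "0 < t" "t < 1" "f x = \<infinity> \<or> f y = \<infinity>"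
    | (finite) a b where "0 < t" "t < 1" "f x = ereal a" "f y = ereal b"
    using t assms(1)[of x] assms(1)[of y] by (cases "f x"; cases "f y") force+
  then show "f ((1 - t) *\<^sub>R x + t *\<^sub>R y) \<le> ereal (1 - t) * f x + ereal t * f y"
  proof cases
    case finite
    then show ?thesis
      using assms(2)[OF finite] by simp
  qed (use assms(1)[of x] assms(1)[of y] in \<open>auto simp: zero_ereal_def[symmetric] one_ereal_def[symmetric]\<close>)
qed

lemma ext_convexD:
  assumes "ext_convex f" "f x = ereal a" "f y = ereal b" "0 \<le> t" "t \<le> 1"
  shows "f ((1 - t) *\<^sub>R x + t *\<^sub>R y) \<le> ereal ((1 - t) * a + t * b)"
  using assms unfolding ext_convex_def by (metis plus_ereal.simps(1) times_ereal.simps(1))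

lemma ext_convex_SUP:
  assumes "\<And>i. i \<in> I \<Longrightarrow> ext_convex (F i)"
  shows "ext_convex (\<lambda>p. SUP i\<in>I. F i p)"
  unfolding ext_convex_def
proof (intro allI impI SUP_least)
  fix x y i and t :: real
  assume t: "0 \<le> t \<and> t \<le> 1" and i: "i \<in> I"
  have "F i ((1 - t) *\<^sub>R x + t *\<^sub>R y) \<le> ereal (1 - t) * F i x + ereal t * F i y"
    using assms[OF i] t unfolding ext_convex_def by blast
  also have "\<dots> \<le> ereal (1 - t) * (SUP i\<in>I. F i x) + ereal t * (SUP i\<in>I. F i y)"
    using i t by (intro add_mono ereal_mult_left_mono SUP_upper) auto
  finally show "F i ((1 - t) *\<^sub>R x + t *\<^sub>R y) \<le> \<dots>" .
qed

lemma ext_convex_max: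
  assumes "ext_convex F" "ext_convex G"
  shows "ext_convex (\<lambda>p. max (F p) (G p))"
proof -
  have "(\<lambda>p. max (F p) (G p)) = (\<lambda>p. SUP H\<in>{F, G}. H p)"
    by auto
  then show ?thesis
    using ext_convex_SUP[of "{F, G}" "\<lambda>H. H"] assms by auto
qed

lemma ext_convex_affine:
  assumes "linear l"
  shows "ext_convex (\<lambda>p. ereal (l p - c))"
  unfolding ext_convex_def
proof (intro allI impI)
  fix x y and t :: real
  have "l ((1 - t) *\<^sub>R x + t *\<^sub>R y) - c = (1 - t) * (l x - c) + t * (l y - c)"
    using linear_add[OF assms, of "(1 - t) *\<^sub>R x" "t *\<^sub>R y"] linear_scale[OF assms, of "1 - t" x]
      linear_scale[OF assms, of t y]
    by (simp add: algebra_simps)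
  then show "ereal (l ((1 - t) *\<^sub>R x + t *\<^sub>R y) - c) \<le> ereal (1 - t) * ereal (l x - c) + ereal t * ereal (l y - c)"
    by simp
qed

lemma ext_convex_ereal_minus:
  assumes "linear l"
  shows "ext_convex (\<lambda>p. ereal (l p) - c)"
proof (cases c)
  case (real r)
  then show ?thesis using ext_convex_affine[OF assms, of r] by simp
next
  case PInf
  then show ?thesis by (simp add: ext_convex_def)
next
  case MInf
  then show ?thesis by (intro ext_convexI) auto
qed

lemma ext_convex_add_split:
  fixes F :: "'a::real_vector \<Rightarrow> ereal" and G :: "'b::real_vector \<Rightarrow> ereal"
  assumes "ext_convex F" "ext_convex G" "\<And>x. F x \<noteq> -\<infinity>" "\<And>y. G y \<noteq> -\<infinity>"
  shows "ext_convex (\<lambda>p. F (fst p) + G (snd p))"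
proof (rule ext_convexI)
  fix p show "F (fst p) + G (snd p) \<noteq> -\<infinity>" using assms(3,4) by simp
next
  fix p q :: "'a \<times> 'b" and t a b :: real
  assume t: "0 < t" "t < 1" and a: "F (fst p) + G (snd p) = ereal a" and b: "F (fst q) + G (snd q) = ereal b"
  obtain a1 a2 where A: "F (fst p) = ereal a1" "G (snd p) = ereal a2" "a = a1 + a2"
    using a assms(3)[of "fst p"] assms(4)[of "snd p"] by (cases "F (fst p)"; cases "G (snd p)") auto
  obtain b1 b2 where B: "F (fst q) = ereal b1" "G (snd q) = ereal b2" "b = b1 + b2"
    using b assms(3)[of "fst q"] assms(4)[of "snd q"] by (cases "F (fst q)"; cases "G (snd q)") auto
  have "F ((1 - t) *\<^sub>R fst p + t *\<^sub>R fst q) \<le> ereal ((1 - t) * a1 + t * b1)"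
    and "G ((1 - t) *\<^sub>R snd p + t *\<^sub>R snd q) \<le> ereal ((1 - t) * a2 + t * b2)"
    using t ext_convexD[OF assms(1) A(1) B(1)] ext_convexD[OF assms(2) A(2) B(2)] by auto
  then have "F (fst ((1 - t) *\<^sub>R p + t *\<^sub>R q)) + G (snd ((1 - t) *\<^sub>R p + t *\<^sub>R q))
        \<le> ereal ((1 - t) * a1 + t * b1) + ereal ((1 - t) * a2 + t * b2)"
    using add_mono by fastforce
  also have "\<dots> = ereal ((1 - t) * a + t * b)"
    using A B by (simp add: algebra_simps)
  finally show "F (fst ((1 - t) *\<^sub>R p + t *\<^sub>R q)) + G (snd ((1 - t) *\<^sub>R p + t *\<^sub>R q)) \<le> ereal ((1 - t) * a + t * b)" .
qed

lemma ext_lsc_SUP: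
  assumes "\<And>i. i \<in> I \<Longrightarrow> ext_lsc (F i)"
  shows "ext_lsc (\<lambda>p. SUP i\<in>I. F i p)"
proof -
  have "{p. (SUP i\<in>I. F i p) \<le> ereal c} = (\<Inter>i\<in>I. {p. F i p \<le> ereal c})" for c
    by (auto simp: SUP_le_iff)
  then show ?thesis
    using assms unfolding ext_lsc_def by auto
qed

lemma ext_lsc_max:
  assumes "ext_lsc F" "ext_lsc G"
  shows "ext_lsc (\<lambda>p. max (F p) (G p))"
proof -
  have "(\<lambda>p. max (F p) (G p)) = (\<lambda>p. SUP H\<in>{F, G}. H p)"
    by auto
  then show ?thesis
    using ext_lsc_SUP[of "{F, G}" "\<lambda>H. H"] assms by auto
qed

lemma ext_lsc_continuous:
  assumes "continuous_on UNIV g"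
  shows "ext_lsc (\<lambda>p. ereal (g p))"
  using closed_Collect_le[OF assms continuous_on_const] by (simp add: ext_lsc_def)

lemma ext_lsc_ereal_minus:
  assumes "continuous_on UNIV g"
  shows "ext_lsc (\<lambda>p. ereal (g p) - c)"
proof (cases c)
  case (real r)
  then show ?thesis
    using ext_lsc_continuous[of "\<lambda>p. g p - r"] assms by (simp add: continuous_on_diff)
qed (simp_all add: ext_lsc_def)

lemma open_ext_lsc_superlevel:
  assumes "ext_lsc F"
  shows "open {x. ereal c < F x}"
proof -
  have "{x. ereal c < F x} = - {x. F x \<le> ereal c}" by auto
  then show ?thesis using assms unfolding ext_lsc_def by (simp add: open_Compl)
qed

lemma ereal_less_add_split:
  fixes a b :: ereal
  assumes "a \<noteq> -\<infinity>" "b \<noteq> -\<infinity>" "ereal c < a + b"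
  obtains q where "ereal q < a" "ereal (c - q) < b"
proof (cases a; cases b)
  fix r s assume "a = ereal r" "b = ereal s"
  then show ?thesis using assms(3) by (intro that[of "r - (r + s - c) / 2"]) (auto simp: field_simps)
next
  fix r assume "a = ereal r" "b = \<infinity>"
  then show ?thesis by (intro that[of "r - 1"]) auto
next
  fix s assume "a = \<infinity>" "b = ereal s"
  then show ?thesis by (intro that[of "c - s + 1"]) auto
next
  assume "a = \<infinity>" "b = \<infinity>"
  then show ?thesis by (intro that[of 0]) auto
qed (use assms in auto)

lemma ext_lsc_add_split:
  fixes F :: "'a::topological_space \<Rightarrow> ereal" and G :: "'b::topological_space \<Rightarrow> ereal"
  assumes "ext_lsc F" "ext_lsc G" "\<And>x. F x \<noteq> -\<infinity>" "\<And>y. G y \<noteq> -\<infinity>"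
  shows "ext_lsc (\<lambda>p. F (fst p) + G (snd p))"
  unfolding ext_lsc_def
proof
  fix c :: real
  have "- {p. F (fst p) + G (snd p) \<le> ereal c}
        = (\<Union>q. {x. ereal q < F x} \<times> {y. ereal (c - q) < G y})"
  proof (intro equalityI subsetI)
    fix p assume "p \<in> - {p. F (fst p) + G (snd p) \<le> ereal c}"
    then have "ereal c < F (fst p) + G (snd p)"
      by simp
    then obtain q where "ereal q < F (fst p)" "ereal (c - q) < G (snd p)"
      using ereal_less_add_split[OF assms(3,4)] by blast
    then show "p \<in> (\<Union>q. {x. ereal q < F x} \<times> {y. ereal (c - q) < G y})"
      by (auto simp: mem_Times_iff)
  next
    fix p assume "p \<in> (\<Union>q. {x. ereal q < F x} \<times> {y. ereal (c - q) < G y})"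
    then obtain q where "ereal q < F (fst p)" "ereal (c - q) < G (snd p)"
      by (auto simp: mem_Times_iff)
    then have "ereal q + ereal (c - q) < F (fst p) + G (snd p)"
      by (rule ereal_add_strict_mono2)
    then show "p \<in> - {p. F (fst p) + G (snd p) \<le> ereal c}"
      by simp
  qed
  moreover have "open (\<Union>q. {x. ereal q < F x} \<times> {y. ereal (c - q) < G y})"
    using assms(1,2) by (intro open_UN ballI open_Times open_ext_lsc_superlevel)
  ultimately show "closed {p. F (fst p) + G (snd p) \<le> ereal c}"
    unfolding closed_def by simp
qed

section \<open>Conjugates and subdifferentials\<close>

lemma ext_proper_neq_minf: "ext_proper f \<Longrightarrow> f x \<noteq> -\<infinity>"
  unfolding ext_proper_def by auto

lemma fenchel_ge: "ereal (blinfun_apply w x) - f x \<le> fenchel f w"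
  unfolding fenchel_def by (rule SUP_upper) auto

lemma fenchel_neq_minf:
  assumes "ext_proper f"
  shows "fenchel f w \<noteq> -\<infinity>"
proof -
  obtain x where "f x \<noteq> \<infinity>" using assms unfolding ext_proper_def by auto
  then have "ereal (blinfun_apply w x) - f x \<noteq> -\<infinity>"
    by (cases "f x") auto
  then show ?thesis
    using fenchel_ge[of w x f] by auto
qed

lemma fenchel_young:
  assumes "ext_proper f"
  shows "ereal (blinfun_apply w x) \<le> f x + fenchel f w"
  using fenchel_ge[of w x f] ext_proper_neq_minf[OF assms, of x] fenchel_neq_minf[OF assms, of w]
  by (cases "f x"; cases "fenchel f w") auto

lemma ext_convex_fenchel: "ext_convex (fenchel f)"
  unfolding fenchel_def[abs_def]
  by (intro ext_convex_SUP ext_convex_ereal_minus bounded_linear.linear[OF blinfun.bounded_linear_left])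

lemma ext_lsc_fenchel: "ext_lsc (fenchel f)"
  unfolding fenchel_def[abs_def]
  by (intro ext_lsc_SUP ext_lsc_ereal_minus continuous_intros)

lemma subdiff_iff:
  assumes "f x = ereal a"
  shows "w \<in> subdiff f x \<longleftrightarrow> (\<forall>y. ereal (a + blinfun_apply w (y - x)) \<le> f y)"
  using assms unfolding subdiff_def by auto

lemma subdiff_finite:
  assumes "ext_proper f" "w \<in> subdiff f x"
  obtains a where "f x = ereal a"
  using assms ext_proper_neq_minf[OF assms(1), of x] unfolding subdiff_def by (cases "f x") auto

lemma subdiff_iff_fenchel_young_eq:
  assumes "ext_proper f"
  shows "w \<in> subdiff f x \<longleftrightarrow> f x + fenchel f w \<le> ereal (blinfun_apply w x)"
proof
  assume w: "w \<in> subdiff f x"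
  then obtain a where a: "f x = ereal a" using subdiff_finite[OF assms] by blast
  have "fenchel f w \<le> ereal (blinfun_apply w x - a)"
    unfolding fenchel_def
  proof (rule SUP_least)
    fix y
    have "ereal (a + blinfun_apply w (y - x)) \<le> f y" using w subdiff_iff[of f, OF a] by blast
    then show "ereal (blinfun_apply w y) - f y \<le> ereal (blinfun_apply w x - a)"
      by (cases "f y") (auto simp: blinfun.diff_right)
  qed
  then show "f x + fenchel f w \<le> ereal (blinfun_apply w x)"
    using a by (cases "fenchel f w") auto
next
  assume le: "f x + fenchel f w \<le> ereal (blinfun_apply w x)"
  then obtain a b where a: "f x = ereal a" and b: "fenchel f w = ereal b"
    using ext_proper_neq_minf[OF assms, of x] fenchel_neq_minf[OF assms, of w]
    by (cases "f x"; cases "fenchel f w") auto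
  have "ereal (a + blinfun_apply w (y - x)) \<le> f y" for y
    using fenchel_ge[of w y f] le a b ext_proper_neq_minf[OF assms, of y]
    by (cases "f y") (auto simp: blinfun.diff_right)
  then show "w \<in> subdiff f x"
    using subdiff_iff[of f, OF a] by blast
qed

lemma fenchel_subdiff:
  assumes "ext_proper f" "w \<in> subdiff f x"
  shows "f x + fenchel f w = ereal (blinfun_apply w x)"
  using assms subdiff_iff_fenchel_young_eq fenchel_young by (metis antisym)

lemma subdiff_common_eq:
  assumes "ext_proper f" "w \<in> subdiff f x" "w \<in> subdiff f y"
  shows "f y = f x + ereal (blinfun_apply w (y - x))"
proof -
  obtain a b where a: "f x = ereal a" and b: "f y = ereal b"
    using subdiff_finite[OF assms(1,2)] subdiff_finite[OF assms(1,3)] by metis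
  have "ereal (a + blinfun_apply w (y - x)) \<le> f y" "ereal (b + blinfun_apply w (x - y)) \<le> f x"
    using assms(2,3) subdiff_iff[of f, OF a] subdiff_iff[of f, OF b] by blast+
  then have "a + blinfun_apply w (y - x) \<le> b" "b + blinfun_apply w (x - y) \<le> a"
    using a b by auto
  moreover have "blinfun_apply w (x - y) = - blinfun_apply w (y - x)"
    by (metis blinfun.minus_right minus_diff_eq)
  ultimately show ?thesis
    using a b by simp
qed

lemma subdiff_cross_estimate:
  assumes "ext_proper f" "u \<in> subdiff f y" "v \<in> subdiff f z"
  shows "f z \<le> f x + ereal (blinfun_apply u (z - x) + blinfun_apply (u - v) (y - z))"
proof (cases "f x")
  case (real \<alpha>)
  obtain \<beta> \<gamma> where \<beta>: "f y = ereal \<beta>" and \<gamma>: "f z = ereal \<gamma>"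
    using subdiff_finite[OF assms(1,2)] subdiff_finite[OF assms(1,3)] by metis
  have "ereal (\<beta> + blinfun_apply u (x - y)) \<le> f x" "ereal (\<gamma> + blinfun_apply v (y - z)) \<le> f y"
    using assms(2,3) subdiff_iff[of f, OF \<beta>] subdiff_iff[of f, OF \<gamma>] by blast+
  then show ?thesis
    using real \<beta> \<gamma> by (simp add: blinfun.diff_left blinfun.diff_right)
qed (use ext_proper_neq_minf[OF assms(1)] in auto)

(* f** restricted to X \<subseteq> X** *)
definition biconjugate :: "('a::real_normed_vector \<Rightarrow> ereal) \<Rightarrow> 'a \<Rightarrow> ereal" where
  "biconjugate f x = (SUP w. ereal (blinfun_apply w x) - fenchel f w)"

lemma biconjugate_le:
  assumes "ext_proper f"
  shows "biconjugate f x \<le> f x"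
  unfolding biconjugate_def
proof (rule SUP_least)
  fix w
  show "ereal (blinfun_apply w x) - fenchel f w \<le> f x"
    using fenchel_young[OF assms, of w x] ext_proper_neq_minf[OF assms, of x] fenchel_neq_minf[OF assms, of w]
    by (cases "f x"; cases "fenchel f w") auto
qed

lemma biconjugate_young: "ereal (blinfun_apply w x) \<le> biconjugate f x + fenchel f w"
proof -
  have "ereal (blinfun_apply w x) - fenchel f w \<le> biconjugate f x"
    unfolding biconjugate_def by (rule SUP_upper) auto
  then show ?thesis
    by (cases "fenchel f w"; cases "biconjugate f x") auto
qed

lemma biconjugate_neq_minf:
  assumes "fenchel f w \<noteq> \<infinity>"
  shows "biconjugate f x \<noteq> -\<infinity>"
  using biconjugate_young[of w x f] assms by (cases "fenchel f w"; cases "biconjugate f x") auto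

lemma ext_convex_biconjugate: "ext_convex (biconjugate f)"
  unfolding biconjugate_def[abs_def]
  by (intro ext_convex_SUP ext_convex_ereal_minus bounded_linear.linear[OF blinfun.bounded_linear_right])

lemma ext_lsc_biconjugate: "ext_lsc (biconjugate f)"
  unfolding biconjugate_def[abs_def]
  by (intro ext_lsc_SUP ext_lsc_ereal_minus continuous_intros)

lemma subdiff_of_le_tangent:
  assumes "ext_proper f" "w \<in> subdiff f x" "f y \<le> f x + ereal (blinfun_apply w (y - x))"
  shows "w \<in> subdiff f y"
proof -
  obtain a where a: "f x = ereal a"
    using subdiff_finite[OF assms(1,2)] .
  then obtain b where b: "f y = ereal b" "b \<le> a + blinfun_apply w (y - x)"
    using assms(3) ext_proper_neq_minf[OF assms(1), of y] by (cases "f y") auto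
  show ?thesis
    using assms(2) b(1) subdiff_iff[of f, OF a] subdiff_iff[of f, OF b(1)] b(2)
    by (auto simp: blinfun.diff_right intro: order_trans[rotated])
qed

section \<open>Weak* closed convex hulls and minimisers\<close>

lemma topspace_weak_star_topology: "topspace weak_star_topology = UNIV"
proof -
  have "UNIV \<in> {{v::'a::real_normed_vector \<Rightarrow>\<^sub>L real. blinfun_apply v x \<in> U} | x U. open U}"
    by (intro CollectI exI[of _ 0] exI[of _ UNIV]) auto
  then show ?thesis
    unfolding weak_star_topology_def by auto
qed

lemma openin_weak_star_halfspace:
  "openin weak_star_topology {v::'a::real_normed_vector \<Rightarrow>\<^sub>L real. c < blinfun_apply v x}"
proof -
  have "{v::'a \<Rightarrow>\<^sub>L real. c < blinfun_apply v x} \<in> {{v. blinfun_apply v x \<in> U} | x U. open U}"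
    by (intro CollectI exI[of _ x] exI[of _ "{c<..}"]) auto
  then show ?thesis
    unfolding weak_star_topology_def by (rule topology_generated_by_Basis)
qed

lemma closedin_weak_star_subdiff: "closedin weak_star_topology (subdiff f x)"
proof (cases "f x")
  case (real a)
  have "closedin weak_star_topology {w. ereal (a + blinfun_apply w (y - x)) \<le> f y}" for y
  proof (cases "f y")
    case (real b)
    have "{w. ereal (a + blinfun_apply w (y - x)) \<le> f y} = UNIV - {w. b - a < blinfun_apply w (y - x)}"
      using real by auto
    then show ?thesis
      using openin_weak_star_halfspace topspace_weak_star_topology by (metis closedin_diff closedin_topspace)
  qed (simp_all add: closedin_topspace[of weak_star_topology, unfolded topspace_weak_star_topology])
  moreover have "subdiff f x = (\<Inter>y. {w. ereal (a + blinfun_apply w (y - x)) \<le> f y})"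
    using subdiff_iff[of f, OF real] by auto
  ultimately show ?thesis
    by auto
next
  case PInf
  then show ?thesis by (simp add: subdiff_def)
next
  case MInf
  then show ?thesis
    using closedin_topspace[of weak_star_topology] by (simp add: subdiff_def topspace_weak_star_topology)
qed

lemma convex_subdiff: "convex (subdiff f x)"
proof (cases "f x")
  case (real a)
  show ?thesis
    unfolding convex_def
  proof (intro ballI allI impI)
    fix w1 w2 and p q :: real
    assume w: "w1 \<in> subdiff f x" "w2 \<in> subdiff f x" and pq: "0 \<le> p" "0 \<le> q" "p + q = 1"
    have "ereal (a + blinfun_apply (p *\<^sub>R w1 + q *\<^sub>R w2) (y - x)) \<le> f y" for y
    proof -
      have w1: "ereal (a + blinfun_apply w1 (y - x)) \<le> f y" and w2: "ereal (a + blinfun_apply w2 (y - x)) \<le> f y"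
        using w subdiff_iff[of f, OF real] by blast+
      show ?thesis
      proof (cases "f y")
        case (real b)
        then have "p * (a + blinfun_apply w1 (y - x)) + q * (a + blinfun_apply w2 (y - x)) \<le> p * b + q * b"
          using w1 w2 pq by (intro add_mono mult_left_mono) auto
        moreover have q: "q = 1 - p"
          using pq(3) by simp
        ultimately show ?thesis
          using real by (simp add: q blinfun.add_left blinfun.diff_left blinfun.scaleR_left algebra_simps)
      qed (use w1 in simp_all)
    qed
    then show "p *\<^sub>R w1 + q *\<^sub>R w2 \<in> subdiff f x"
      using subdiff_iff[of f, OF real] by blast
  qed
qed (auto simp: subdiff_def)

lemma weak_star_closed_convex_hull_minimal:
  assumes "S \<subseteq> T" "convex T" "closedin weak_star_topology T"
  shows "weak_star_closed_convex_hull S \<subseteq> T"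
  unfolding weak_star_closed_convex_hull_def using assms by (intro hull_minimal) auto

lemma weak_star_closed_convex_hull_empty: "weak_star_closed_convex_hull {} = {}"
  using weak_star_closed_convex_hull_minimal[of "{}" "{}"] by auto

lemma blinfun_eq_on_closure_convex_hull:
  assumes "\<And>a. a \<in> A \<Longrightarrow> blinfun_apply w a = c" "k \<in> closure (convex hull A)"
  shows "blinfun_apply w k = c"
proof -
  have "convex (blinfun_apply w -` {c})"
    by (intro convex_linear_vimage bounded_linear.linear[OF blinfun.bounded_linear_right] convex_singleton)
  moreover have "closed (blinfun_apply w -` {c})"
    by (intro continuous_closed_vimage continuous_intros)
  ultimately have "closure (convex hull A) \<subseteq> blinfun_apply w -` {c}"
    using assms(1) by (intro closure_minimal hull_minimal) auto
  then show ?thesis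
    using assms(2) by auto
qed

lemma argmin_ext_eq_sublevel: "z \<in> argmin_ext f \<Longrightarrow> argmin_ext f = {x. f x \<le> f z}"
  unfolding argmin_ext_def by (auto intro: order_trans)

lemma INF_eq_argmin_ext: "z \<in> argmin_ext f \<Longrightarrow> (INF y. f y) = f z"
  unfolding argmin_ext_def by (intro antisym INF_lower INF_greatest) auto

lemma argmin_ext_subset_dom:
  assumes "ext_proper f"
  shows "argmin_ext f \<subseteq> dom_ext f"
proof
  fix x assume "x \<in> argmin_ext f"
  moreover obtain y where "f y \<noteq> \<infinity>"
    using assms unfolding ext_proper_def by auto
  ultimately have "f x \<le> f y" "f y \<noteq> \<infinity>"
    unfolding argmin_ext_def by auto
  then show "x \<in> dom_ext f"
    unfolding dom_ext_def by auto
qed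

lemma argmin_ext_finite:
  assumes "ext_proper f" "z \<in> argmin_ext f"
  obtains c where "f z = ereal c"
  using argmin_ext_subset_dom[OF assms(1)] assms ext_proper_neq_minf[OF assms(1), of z]
  by (cases "f z") (auto simp: dom_ext_def)

lemma closed_argmin_ext:
  assumes "ext_proper f" "ext_lsc f"
  shows "closed (argmin_ext f)"
proof (cases "argmin_ext f = {}")
  case False
  then obtain z c where "z \<in> argmin_ext f" "f z = ereal c"
    using argmin_ext_finite[OF assms(1)] by blast
  then have "argmin_ext f = {x. f x \<le> ereal c}"
    using argmin_ext_eq_sublevel[of z f] by simp
  then show ?thesis
    using assms(2) unfolding ext_lsc_def by simp
qed simp

lemma convex_ext_sublevel:
  assumes "ext_convex f" "\<And>x. f x \<noteq> -\<infinity>"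
  shows "convex {x. f x \<le> ereal c}"
proof (rule convexI)
  fix x y and p q :: real
  assume x: "x \<in> {x. f x \<le> ereal c}" and y: "y \<in> {x. f x \<le> ereal c}" and pq: "0 \<le> p" "0 \<le> q" "p + q = 1"
  obtain a b where a: "f x = ereal a" "a \<le> c" and b: "f y = ereal b" "b \<le> c"
    using x y assms(2)[of x] assms(2)[of y] by (cases "f x"; cases "f y") auto
  have "(1 - q) * a + q * b \<le> (1 - q) * c + q * c"
    using pq a(2) b(2) by (intro add_mono mult_left_mono) auto
  then have "(1 - q) * a + q * b \<le> c"
    by (simp add: algebra_simps)
  moreover have "f ((1 - q) *\<^sub>R x + q *\<^sub>R y) \<le> ereal ((1 - q) * a + q * b)"
    using ext_convexD[OF assms(1) a(1) b(1)] pq by simp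
  moreover have "p = 1 - q"
    using pq(3) by simp
  ultimately show "p *\<^sub>R x + q *\<^sub>R y \<in> {x. f x \<le> ereal c}"
    using order_trans ereal_less_eq(3) by blast
qed

lemma convex_argmin_ext:
  assumes "ext_proper f" "ext_convex f"
  shows "convex (argmin_ext f)"
proof (cases "argmin_ext f = {}")
  case False
  then obtain z c where "z \<in> argmin_ext f" "f z = ereal c"
    using argmin_ext_finite[OF assms(1)] by blast
  then show ?thesis
    using argmin_ext_eq_sublevel[of z f] convex_ext_sublevel[OF assms(2) ext_proper_neq_minf[OF assms(1)]]
    by simp
qed simp

section \<open>Local boundedness on the interior of the domain\<close>

lemma ext_lsc_bounded_above_on_ball:
  fixes f :: "'a::banach \<Rightarrow> ereal"
  assumes "ext_lsc f" "open U" "U \<noteq> {}" "\<And>y. y \<in> U \<Longrightarrow> f y \<noteq> \<infinity>"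
  obtains c r M where "r > 0" "\<And>y. y \<in> ball c r \<Longrightarrow> f y \<le> ereal M"
proof -
  define X where "X = top_of_set U"
  define T where "T n = {y \<in> U. f y \<le> ereal (real n)}" for n :: nat
  have "completely_metrizable_space X"
    unfolding X_def using assms(2)
    by (intro completely_metrizable_space_openin completely_metrizable_space_euclidean) auto
  moreover have "closedin X (T n)" for n
    using assms(1) unfolding X_def T_def ext_lsc_def closedin_closed
    by (intro exI[of _ "{y. f y \<le> ereal (real n)}"]) auto
  moreover have "\<Union>(range T) = topspace X"
  proof -
    have "y \<in> \<Union>(range T)" if y: "y \<in> U" for y
    proof -
      obtain a where "f y \<le> ereal a"
        using assms(4)[OF y] by (cases "f y") auto
      moreover obtain n :: nat where "a \<le> real n"
        using real_arch_simple by blast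
      ultimately have "f y \<le> ereal (real n)"
        by (meson order_trans ereal_less_eq(3))
      then show ?thesis
        using y unfolding T_def by blast
    qed
    then show ?thesis unfolding X_def T_def by auto
  qed
  ultimately obtain n where "X interior_of T n \<noteq> {}"
    using Baire_category_alt[of X "range T"] assms(3) interior_of_topspace[of X]
    by (auto simp: X_def)
  then obtain V y where "openin X V" "y \<in> V" "V \<subseteq> T n"
    unfolding interior_of_def by blast
  moreover from this have "open V"
    using assms(2) unfolding X_def by (metis openin_open_trans)
  ultimately obtain r where "r > 0" "ball y r \<subseteq> T n"
    by (meson open_contains_ball order_trans)
  then show ?thesis
    using that[of r y "real n"] unfolding T_def by blast
qed

lemma ext_convex_bound_on_shrunk_ball:
  fixes f :: "'a::real_normed_vector \<Rightarrow> ereal"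
  assumes "ext_convex f" "\<And>y. y \<in> ball c r \<Longrightarrow> f y \<le> ereal M" "f q \<le> ereal Q" "0 < l" "l \<le> 1"
    and "x = (1 - l) *\<^sub>R q + l *\<^sub>R c" "y \<in> ball x (l * r)"
  shows "f y \<le> ereal (max Q M)"
proof -
  define m where "m = max Q M"
  define b where "b = (1 / l) *\<^sub>R (y - x)"
  have "norm b = dist x y / l"
    using assms(4) by (simp add: b_def dist_norm norm_minus_commute)
  also have "\<dots> < r"
    using assms(4,7) by (simp add: divide_less_eq mult.commute)
  finally have "f (c + b) \<le> ereal M"
    by (intro assms(2)) (simp add: dist_norm)
  have "y = (1 - l) *\<^sub>R q + l *\<^sub>R (c + b)"
    using assms(4,6) by (simp add: b_def algebra_simps)
  then have "f y \<le> ereal (1 - l) * f q + ereal l * f (c + b)"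
    using assms(1,4,5) unfolding ext_convex_def by simp
  also have "\<dots> \<le> ereal (1 - l) * ereal m + ereal l * ereal m"
    using assms(3,4,5) \<open>f (c + b) \<le> ereal M\<close> unfolding m_def
    by (intro add_mono ereal_mult_left_mono) (auto intro: order_trans)
  also have "\<dots> = ereal m"
    by (simp add: algebra_simps)
  finally show ?thesis
    unfolding m_def .
qed

lemma ext_convex_lsc_bounded_above_near_interior:
  fixes f :: "'a::banach \<Rightarrow> ereal"
  assumes "ext_convex f" "ext_lsc f" "x \<in> interior (dom_ext f)"
  obtains \<rho> M where "\<rho> > 0" "\<And>y. y \<in> ball x \<rho> \<Longrightarrow> f y \<le> ereal M"
proof -
  obtain r where r: "r > 0" "ball x r \<subseteq> dom_ext f"
    using assms(3) by (meson mem_interior)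
  have "ball x r \<noteq> {}" "\<And>y. y \<in> ball x r \<Longrightarrow> f y \<noteq> \<infinity>"
    using r by (auto simp: dom_ext_def)
  then obtain c r1 M where r1: "r1 > 0" "\<And>y. y \<in> ball c r1 \<Longrightarrow> f y \<le> ereal M"
    using ext_lsc_bounded_above_on_ball[OF assms(2) open_ball] by metis
  (* Convexity transfers the bound from B(c, r1) to a ball around x, obtained by shrinking
     B(c, r1) towards a point q of dom f beyond x. *)
  define d where "d = norm (x - c) + 1"
  define \<tau> where "\<tau> = r / (2 * d)"
  define q where "q = x + \<tau> *\<^sub>R (x - c)"
  define l where "l = \<tau> / (1 + \<tau>)"
  have d: "0 < d"
    unfolding d_def by (smt (verit) norm_ge_zero)
  then have "\<tau> * d = r / 2"
    by (simp add: \<tau>_def)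
  then have "\<tau> * norm (x - c) + \<tau> = r / 2"
    by (simp add: d_def distrib_left)
  moreover have "\<tau> > 0"
    using r(1) d by (simp add: \<tau>_def)
  ultimately have \<tau>: "\<tau> > 0" "\<tau> * norm (x - c) < r"
    using r(1) by linarith+
  then have "q \<in> dom_ext f"
    using r(2) by (auto simp: q_def dist_norm)
  then obtain Q where "f q \<le> ereal Q"
    by (cases "f q") (auto simp: dom_ext_def)
  moreover have "0 < l" "l \<le> 1" and l: "(1 - l) * (1 + \<tau>) = 1" "l - (1 - l) * \<tau> = 0"
    using \<tau>(1) by (simp_all add: l_def field_simps)
  moreover have "x = (1 - l) *\<^sub>R q + l *\<^sub>R c"
  proof -
    have "(1 - l) *\<^sub>R q + l *\<^sub>R c = ((1 - l) * (1 + \<tau>)) *\<^sub>R x + (l - (1 - l) * \<tau>) *\<^sub>R c"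
      by (simp add: q_def algebra_simps)
    then show ?thesis
      by (simp add: l)
  qed
  ultimately show ?thesis
    using ext_convex_bound_on_shrunk_ball[OF assms(1) r1(2), where q=q and Q=Q and l=l and x=x] r1(1)
    by (intro that[of "l * r1" "max Q M"]) auto
qed

lemma norm_blinfun_le_of_bounded_above:
  assumes "\<rho> > 0" "\<And>h. norm h < \<rho> \<Longrightarrow> blinfun_apply u h \<le> C"
  shows "norm u \<le> 2 * C / \<rho>"
proof (rule norm_blinfun_bound)
  show "0 \<le> 2 * C / \<rho>"
    using assms(2)[of 0] assms(1) by simp
  fix h
  show "norm (blinfun_apply u h) \<le> 2 * C / \<rho> * norm h"
  proof (cases "h = 0")
    case False
    define h' where "h' = (\<rho> / (2 * norm h)) *\<^sub>R h"
    have "norm h' < \<rho>"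
      using False assms(1) by (simp add: h'_def)
    then have "\<bar>blinfun_apply u h'\<bar> \<le> C"
      using assms(2)[of h'] assms(2)[of "- h'"] by (simp add: blinfun.minus_right)
    moreover have "blinfun_apply u h' = \<rho> / (2 * norm h) * blinfun_apply u h"
      by (simp add: h'_def blinfun.scaleR_right)
    ultimately show ?thesis
      using False assms(1) by (simp add: abs_mult field_simps)
  qed simp
qed

lemma norm_approx_subgradient_le:
  assumes "f x = ereal \<alpha>" "\<rho> > 0" "\<And>y. y \<in> ball x \<rho> \<Longrightarrow> f y \<le> ereal M"
    and "\<And>y. f x + ereal (blinfun_apply u (y - x) - \<epsilon>) \<le> f y"
  shows "norm u \<le> 2 * (M - \<alpha> + \<epsilon>) / \<rho>"
proof (rule norm_blinfun_le_of_bounded_above[OF assms(2)])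
  fix h :: 'a assume "norm h < \<rho>"
  then have "f (x + h) \<le> ereal M"
    by (intro assms(3)) (simp add: dist_norm)
  moreover have "f x + ereal (blinfun_apply u h - \<epsilon>) \<le> f (x + h)"
    using assms(4)[of "x + h"] by simp
  ultimately show "blinfun_apply u h \<le> M - \<alpha> + \<epsilon>"
    using assms(1) by (smt (verit) ereal_less_eq(3) order_trans plus_ereal.simps(1))
qed

lemma approx_subgradients_bounded_at_interior:
  fixes f :: "'a::banach \<Rightarrow> ereal"
  assumes "ext_convex f" "ext_lsc f" "x \<in> interior (dom_ext f)" "\<And>x. f x \<noteq> -\<infinity>"
  obtains B where "B \<ge> 0"
    "\<And>u \<epsilon>. \<epsilon> \<le> 1 \<Longrightarrow> (\<And>y. f x + ereal (blinfun_apply u (y - x) - \<epsilon>) \<le> f y) \<Longrightarrow> norm u \<le> B"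
proof -
  have "x \<in> dom_ext f"
    using assms(3) interior_subset by blast
  then obtain \<alpha> where \<alpha>: "f x = ereal \<alpha>"
    using assms(4)[of x] by (cases "f x") (auto simp: dom_ext_def)
  obtain \<rho> M where \<rho>: "\<rho> > 0" "\<And>y. y \<in> ball x \<rho> \<Longrightarrow> f y \<le> ereal M"
    using ext_convex_lsc_bounded_above_near_interior[OF assms(1-3)] by metis
  have "\<alpha> \<le> M"
    using \<rho>(2)[of x] \<rho>(1) \<alpha> by simp
  show ?thesis
  proof (rule that[of "2 * (M - \<alpha> + 1) / \<rho>"])
    show "2 * (M - \<alpha> + 1) / \<rho> \<ge> 0"
      using \<open>\<alpha> \<le> M\<close> \<rho>(1) by simp
    fix u and \<epsilon> :: real
    assume \<epsilon>: "\<epsilon> \<le> 1" and u: "\<And>y. f x + ereal (blinfun_apply u (y - x) - \<epsilon>) \<le> f y"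
    have "norm u \<le> 2 * (M - \<alpha> + \<epsilon>) / \<rho>"
      using norm_approx_subgradient_le[of f x, OF \<alpha> \<rho> u] .
    also have "\<dots> \<le> 2 * (M - \<alpha> + 1) / \<rho>"
      using \<epsilon> \<rho>(1) by (simp add: divide_right_mono)
    finally show "norm u \<le> 2 * (M - \<alpha> + 1) / \<rho>" .
  qed
qed

section \<open>Frechet gradients of conjugates\<close>

lemma frechet_grad_at_finite:
  assumes "frechet_grad_at g v z"
  obtains a where "g v = ereal a"
proof -
  have "\<bar>g v\<bar> \<noteq> \<infinity>"
    using assms unfolding frechet_grad_at_def by (metis centre_in_ball)
  then show ?thesis
    using that by (cases "g v") auto
qed

lemma frechet_grad_atD:
  assumes "frechet_grad_at g v z" "g v = ereal a" "\<eta> > 0"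
  obtains \<delta> where "\<delta> > 0"
    "\<And>h. norm h < \<delta> \<Longrightarrow> ereal (a + blinfun_apply h z - \<eta> * norm h) \<le> g (v + h)"
    "\<And>h. norm h < \<delta> \<Longrightarrow> g (v + h) \<le> ereal (a + blinfun_apply h z + \<eta> * norm h)"
proof -
  obtain e where e: "e > 0" "\<And>w. w \<in> ball v e \<Longrightarrow> \<bar>g w\<bar> \<noteq> \<infinity>"
    using assms(1) unfolding frechet_grad_at_def by auto
  have "((\<lambda>w. real_of_ereal (g w)) has_derivative (\<lambda>w. blinfun_apply w z)) (at v)"
    using assms(1) unfolding frechet_grad_at_def by (rule conjunct2)
  then obtain d where d: "d > 0" "\<And>w. norm (w - v) < d \<Longrightarrow>
      \<bar>real_of_ereal (g w) - real_of_ereal (g v) - blinfun_apply (w - v) z\<bar> \<le> \<eta> * norm (w - v)"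
    using assms(3) unfolding has_derivative_at_alt real_norm_def by blast
  have "ereal (a + blinfun_apply h z - \<eta> * norm h) \<le> g (v + h) \<and> g (v + h) \<le> ereal (a + blinfun_apply h z + \<eta> * norm h)"
    if h: "norm h < min d e" for h
  proof -
    have "\<bar>g (v + h)\<bar> \<noteq> \<infinity>"
      using h by (intro e(2)) (simp add: dist_norm)
    then obtain r where "g (v + h) = ereal r"
      by (cases "g (v + h)") auto
    moreover have "\<bar>real_of_ereal (g (v + h)) - a - blinfun_apply h z\<bar> \<le> \<eta> * norm h"
      using d(2)[of "v + h"] h assms(2) by simp
    ultimately show ?thesis
      by (simp add: abs_le_iff)
  qed
  then show ?thesis
    using that[of "min d e"] d(1) e(1) by simp
qed

lemma ext_convex_frechet_grad_subgradient_approx: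
  assumes "ext_convex g" "frechet_grad_at g v z" "g v = ereal a" "g w = ereal b" "\<eta> > 0"
  shows "blinfun_apply (w - v) z \<le> b - a + \<eta> * norm (w - v)"
proof (cases "w = v")
  case False
  obtain \<delta> where \<delta>: "\<delta> > 0" "\<And>h. norm h < \<delta> \<Longrightarrow> ereal (a + blinfun_apply h z - \<eta> * norm h) \<le> g (v + h)"
    using frechet_grad_atD[OF assms(2,3,5)] by metis
  define t where "t = min 1 (\<delta> / (2 * norm (w - v)))"
  define h where "h = t *\<^sub>R (w - v)"
  have t: "0 < t" "t \<le> 1" "t * norm (w - v) < \<delta>"
    using \<delta>(1) False by (auto simp: t_def min_def field_simps)
  then have nh: "norm h < \<delta>" "norm h = t * norm (w - v)"
    by (simp_all add: h_def)
  have "(1 - t) *\<^sub>R v + t *\<^sub>R w = v + h"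
    by (simp add: h_def algebra_simps)
  then have "g (v + h) \<le> ereal ((1 - t) * a + t * b)"
    using ext_convexD[OF assms(1,3,4), of t] t by simp
  then have "a + blinfun_apply h z - \<eta> * norm h \<le> (1 - t) * a + t * b"
    using \<delta>(2)[OF nh(1)] by (meson ereal_less_eq(3) order_trans)
  moreover have "blinfun_apply h z = t * blinfun_apply (w - v) z"
    by (simp add: h_def blinfun.scaleR_left)
  ultimately have "t * blinfun_apply (w - v) z \<le> t * (b - a + \<eta> * norm (w - v))"
    unfolding nh(2) by (simp add: algebra_simps)
  then show ?thesis
    using t(1) by simp
qed (use assms(3,4) in simp)

lemma ext_convex_frechet_grad_subgradient:
  assumes "ext_convex g" "\<And>w. g w \<noteq> -\<infinity>" "frechet_grad_at g v z" "g v = ereal a"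
  shows "ereal (a + blinfun_apply (w - v) z) \<le> g w"
proof (cases "g w")
  case (real b)
  have "blinfun_apply (w - v) z \<le> b - a"
  proof (rule field_le_epsilon)
    fix e :: real assume e: "0 < e"
    define \<eta> where "\<eta> = e / (norm (w - v) + 1)"
    have "0 < norm (w - v) + 1"
      by (smt (verit) norm_ge_zero)
    then have "\<eta> > 0" "\<eta> * (norm (w - v) + 1) = e"
      using e by (simp_all add: \<eta>_def)
    then have "\<eta> > 0" "\<eta> * norm (w - v) + \<eta> = e"
      by (simp_all add: distrib_left)
    then show "blinfun_apply (w - v) z \<le> b - a + e"
      using ext_convex_frechet_grad_subgradient_approx[OF assms(1,3,4) real, of \<eta>] by linarith
  qed
  then show ?thesis
    using real by simp
qed (use assms(2) in auto)

lemma fenchel_frechet_grad_pairing: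
  assumes "frechet_grad_at (fenchel f) v z" "fenchel f v = ereal a" "\<eta> > 0"
  obtains \<delta> where "\<delta> > 0" "\<And>h y \<beta>. norm h < \<delta> \<Longrightarrow> f y = ereal \<beta> \<Longrightarrow>
    blinfun_apply h (y - z) \<le> a - (blinfun_apply v y - \<beta>) + \<eta> * norm h"
proof -
  obtain \<delta> where \<delta>: "\<delta> > 0"
    "\<And>h. norm h < \<delta> \<Longrightarrow> fenchel f (v + h) \<le> ereal (a + blinfun_apply h z + \<eta> * norm h)"
    using frechet_grad_atD[OF assms] by metis
  have "blinfun_apply h (y - z) \<le> a - (blinfun_apply v y - \<beta>) + \<eta> * norm h"
    if "norm h < \<delta>" "f y = ereal \<beta>" for h y \<beta>
  proof -
    have "ereal (blinfun_apply (v + h) y - \<beta>) \<le> fenchel f (v + h)"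
      using fenchel_ge[of "v + h" y f] that(2) by simp
    also have "\<dots> \<le> ereal (a + blinfun_apply h z + \<eta> * norm h)"
      by (rule \<delta>(2)[OF that(1)])
    finally show ?thesis
      by (simp add: blinfun.add_left blinfun.diff_right)
  qed
  then show ?thesis
    using that \<delta>(1) by blast
qed

(* A quantitative form of Smulian's lemma. *)
lemma fenchel_grad_near_maximizer:
  fixes f :: "'a::real_normed_vector \<Rightarrow> ereal" and \<kappa> B :: real
  assumes "frechet_grad_at (fenchel f) v z" "fenchel f v = ereal a" "\<kappa> > 0" "B \<ge> 0"
  obtains \<epsilon> where "\<epsilon> > 0"
    "\<And>y \<beta> d. f y = ereal \<beta> \<Longrightarrow> a - \<epsilon> < blinfun_apply v y - \<beta> \<Longrightarrow> norm d \<le> B \<Longrightarrow>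
       blinfun_apply d (y - z) \<le> \<kappa>"
proof -
  define D where "D = B + 1"
  have D: "D > 0" "B < D"
    using assms(4) by (simp_all add: D_def)
  obtain \<delta> where \<delta>: "\<delta> > 0" "\<And>h y \<beta>. norm h < \<delta> \<Longrightarrow> f y = ereal \<beta> \<Longrightarrow>
      blinfun_apply h (y - z) \<le> a - (blinfun_apply v y - \<beta>) + \<kappa> / (2 * D) * norm h"
    using fenchel_frechet_grad_pairing[OF assms(1,2), of "\<kappa> / (2 * D)"] assms(3) D(1) by auto
  define \<epsilon> where "\<epsilon> = \<kappa> * \<delta> / (4 * D)"
  show ?thesis
  proof (rule that[of \<epsilon>])
    show "\<epsilon> > 0"
      using assms(3) \<delta>(1) D(1) by (simp add: \<epsilon>_def)
    fix y \<beta> and d :: "'a \<Rightarrow>\<^sub>L real"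
    assume y: "f y = ereal \<beta>" and near: "a - \<epsilon> < blinfun_apply v y - \<beta>" and d: "norm d \<le> B"
    show "blinfun_apply d (y - z) \<le> \<kappa>"
    proof (cases "d = 0")
      case False
      define s where "s = \<delta> / (2 * norm d)"
      have s: "s > 0" "norm (s *\<^sub>R d) = \<delta> / 2"
        using False \<delta>(1) by (simp_all add: s_def)
      then have "norm (s *\<^sub>R d) < \<delta>"
        using \<delta>(1) by linarith
      from \<delta>(2)[OF this y]
      have "s * blinfun_apply d (y - z) \<le> a - (blinfun_apply v y - \<beta>) + \<epsilon>"
        unfolding s(2) by (simp add: \<epsilon>_def blinfun.scaleR_left)
      also have "\<dots> < 2 * \<epsilon>"
        using near by linarith
      also have "\<dots> = s * (\<kappa> * norm d / D)"
        using False by (simp add: s_def \<epsilon>_def field_simps)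
      finally have "blinfun_apply d (y - z) < \<kappa> * norm d / D"
        using mult_less_cancel_left_pos[OF s(1)] by (simp del: times_divide_eq_right)
      also have "\<dots> \<le> \<kappa>"
        using d D assms(3) by (simp add: field_simps)
      finally show ?thesis
        by simp
    qed (use assms(3) in simp)
  qed
qed

section \<open>The Fitzpatrick family\<close>

definition monotone_graph :: "('a::real_normed_vector \<times> ('a \<Rightarrow>\<^sub>L real)) set \<Rightarrow> bool" where
  "monotone_graph A \<longleftrightarrow> (\<forall>(x, v)\<in>A. \<forall>(y, u)\<in>A. 0 \<le> blinfun_apply (v - u) (x - y))"

definition maximal_monotone_graph :: "('a::real_normed_vector \<times> ('a \<Rightarrow>\<^sub>L real)) set \<Rightarrow> bool" where
  "maximal_monotone_graph A \<longleftrightarrow> monotone_graph A \<and>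
     (\<forall>x v. (\<forall>(y, u)\<in>A. 0 \<le> blinfun_apply (v - u) (x - y)) \<longrightarrow> (x, v) \<in> A)"

definition fitzpatrick_function ::
  "('a::real_normed_vector \<times> ('a \<Rightarrow>\<^sub>L real)) set \<Rightarrow> 'a \<times> ('a \<Rightarrow>\<^sub>L real) \<Rightarrow> ereal" where
  "fitzpatrick_function A p =
     (SUP q\<in>A. ereal (blinfun_apply (snd p) (fst q) + blinfun_apply (snd q) (fst p) - blinfun_apply (snd q) (fst q)))"

lemma linear_pairing_sum:
  "linear (\<lambda>p::'a::real_normed_vector \<times> ('a \<Rightarrow>\<^sub>L real). blinfun_apply (snd p) y + blinfun_apply u (fst p))"
  by (rule linearI) (simp_all add: blinfun.add_left blinfun.scaleR_left blinfun.add_right blinfun.scaleR_right algebra_simps)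

lemma monotone_graph_subdiff:
  assumes "ext_proper f"
  shows "monotone_graph (graph_subdiff f)"
  unfolding monotone_graph_def graph_subdiff_def
proof (clarsimp)
  fix x v y u assume v: "v \<in> subdiff f x" and u: "u \<in> subdiff f y"
  obtain a b where a: "f x = ereal a" and b: "f y = ereal b"
    using subdiff_finite[OF assms v] subdiff_finite[OF assms u] by metis
  have "ereal (a + blinfun_apply v (y - x)) \<le> f y" "ereal (b + blinfun_apply u (x - y)) \<le> f x"
    using v u subdiff_iff[of f, OF a] subdiff_iff[of f, OF b] by blast+
  then have "a + blinfun_apply v (y - x) \<le> b" "b + blinfun_apply u (x - y) \<le> a"
    using a b by auto
  moreover have "blinfun_apply v (y - x) = - blinfun_apply v (x - y)"
    by (metis blinfun.minus_right minus_diff_eq)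
  ultimately show "0 \<le> blinfun_apply (v - u) (x - y)"
    by (simp add: blinfun.diff_left)
qed

lemma fitzpatrick_family_split_sum:
  assumes "ext_proper f" "graph_subdiff f \<noteq> {}"
    and "ext_convex g" "ext_lsc g" "\<And>x. g x \<noteq> -\<infinity>" "\<And>x. g x \<le> f x"
    and "\<And>x w. ereal (blinfun_apply w x) \<le> g x + fenchel f w"
  shows "(\<lambda>p. g (fst p) + fenchel f (snd p)) \<in> fitzpatrick_family (graph_subdiff f)"
  unfolding fitzpatrick_family_def
proof (intro CollectI conjI allI)
  have on_graph: "g x + fenchel f w = ereal (blinfun_apply w x)" if "(x, w) \<in> graph_subdiff f" for x w
  proof (rule antisym)
    have "g x + fenchel f w \<le> f x + fenchel f w"
      using assms(6) by (rule add_right_mono)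
    also have "\<dots> = ereal (blinfun_apply w x)"
      using fenchel_subdiff[OF assms(1)] that by (simp add: graph_subdiff_def)
    finally show "g x + fenchel f w \<le> ereal (blinfun_apply w x)" .
  qed (rule assms(7))
  then show "\<forall>(x, v)\<in>graph_subdiff f. g (fst (x, v)) + fenchel f (snd (x, v)) = ereal (blinfun_apply v x)"
    by auto
  obtain x w where xw: "(x, w) \<in> graph_subdiff f" using assms(2) by auto
  show "ext_proper (\<lambda>p. g (fst p) + fenchel f (snd p))"
    unfolding ext_proper_def
  proof
    show "\<forall>p. g (fst p) + fenchel f (snd p) \<noteq> -\<infinity>"
      using assms(5) fenchel_neq_minf[OF assms(1)] by simp
    show "\<exists>p. g (fst p) + fenchel f (snd p) \<noteq> \<infinity>"
      using on_graph[OF xw] by (intro exI[of _ "(x, w)"]) simp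
  qed
  show "ext_convex (\<lambda>p. g (fst p) + fenchel f (snd p))"
    by (rule ext_convex_add_split[OF assms(3) ext_convex_fenchel assms(5) fenchel_neq_minf[OF assms(1)]])
  show "ext_lsc (\<lambda>p. g (fst p) + fenchel f (snd p))"
    by (rule ext_lsc_add_split[OF assms(4) ext_lsc_fenchel assms(5) fenchel_neq_minf[OF assms(1)]])
  show "ereal (blinfun_apply v x) \<le> g (fst (x, v)) + fenchel f (snd (x, v))" for x v
    using assms(7) by simp
qed

lemma fitzpatrick_family_max:
  assumes "h \<in> fitzpatrick_family A" "A \<noteq> {}"
    and "ext_convex g" "ext_lsc g" "\<forall>(x, v)\<in>A. g (x, v) \<le> ereal (blinfun_apply v x)"
  shows "(\<lambda>p. max (h p) (g p)) \<in> fitzpatrick_family A"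
proof -
  have h: "ext_proper h" "ext_convex h" "ext_lsc h" "\<And>x v. ereal (blinfun_apply v x) \<le> h (x, v)"
    "\<And>x v. (x, v) \<in> A \<Longrightarrow> h (x, v) = ereal (blinfun_apply v x)"
    using assms(1) unfolding fitzpatrick_family_def by auto
  have on_A: "max (h (x, v)) (g (x, v)) = ereal (blinfun_apply v x)" if "(x, v) \<in> A" for x v
    using h(5)[OF that] assms(5) that by auto
  obtain x v where xv: "(x, v) \<in> A" using assms(2) by auto
  show ?thesis
    unfolding fitzpatrick_family_def
  proof (intro CollectI conjI allI)
    show "ext_proper (\<lambda>p. max (h p) (g p))"
      unfolding ext_proper_def
    proof
      show "\<forall>p. max (h p) (g p) \<noteq> -\<infinity>"
        using h(1) unfolding ext_proper_def by (metis max.cobounded1 ereal_infty_less_eq(2))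
      show "\<exists>p. max (h p) (g p) \<noteq> \<infinity>"
        using on_A[OF xv] by (intro exI[of _ "(x, v)"]) simp
    qed
    show "ext_convex (\<lambda>p. max (h p) (g p))"
      using h(2) assms(3) by (rule ext_convex_max)
    show "ext_lsc (\<lambda>p. max (h p) (g p))"
      using h(3) assms(4) by (rule ext_lsc_max)
    show "ereal (blinfun_apply v x) \<le> max (h (x, v)) (g (x, v))" for x v
      using h(4) by (simp add: le_max_iff_disj)
    show "\<forall>(x, v)\<in>A. max (h (x, v)) (g (x, v)) = ereal (blinfun_apply v x)"
      using on_A by auto
  qed
qed

lemma fitzpatrick_function_ge:
  assumes "maximal_monotone_graph A"
  shows "ereal (blinfun_apply v x) \<le> fitzpatrick_function A (x, v)"
proof (cases "(x, v) \<in> A")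
  case True
  then show ?thesis
    unfolding fitzpatrick_function_def by (auto intro!: SUP_upper2[OF True])
next
  case False
  then have "\<not> (\<forall>(y, u)\<in>A. 0 \<le> blinfun_apply (v - u) (x - y))"
    using assms unfolding maximal_monotone_graph_def by blast
  then obtain y u where yu: "(y, u) \<in> A" and "blinfun_apply (v - u) (x - y) < 0"
    by (auto simp: not_le)
  then have "ereal (blinfun_apply v x) \<le> ereal (blinfun_apply v y + blinfun_apply u x - blinfun_apply u y)"
    by (simp add: blinfun.diff_left blinfun.diff_right)
  also have "\<dots> \<le> fitzpatrick_function A (x, v)"
    unfolding fitzpatrick_function_def by (rule SUP_upper2[OF yu]) simp
  finally show ?thesis .
qed

lemma fitzpatrick_function_le_on_graph:
  assumes "monotone_graph A" "(x, v) \<in> A"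
  shows "fitzpatrick_function A (x, v) \<le> ereal (blinfun_apply v x)"
  unfolding fitzpatrick_function_def
proof (rule SUP_least, clarify)
  fix y u assume "(y, u) \<in> A"
  then have "0 \<le> blinfun_apply (v - u) (x - y)"
    using assms unfolding monotone_graph_def by blast
  then show "ereal (blinfun_apply (snd (x, v)) (fst (y, u)) + blinfun_apply (snd (y, u)) (fst (x, v))
      - blinfun_apply (snd (y, u)) (fst (y, u))) \<le> ereal (blinfun_apply v x)"
    by (simp add: blinfun.diff_left blinfun.diff_right)
qed

lemma fitzpatrick_function_in_family:
  assumes "maximal_monotone_graph A" "A \<noteq> {}"
  shows "fitzpatrick_function A \<in> fitzpatrick_family A"
  unfolding fitzpatrick_family_def
proof (intro CollectI conjI allI)
  have on_A: "fitzpatrick_function A (x, v) = ereal (blinfun_apply v x)" if "(x, v) \<in> A" for x v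
    using assms(1) that fitzpatrick_function_ge fitzpatrick_function_le_on_graph
    unfolding maximal_monotone_graph_def by (blast intro: antisym)
  then show "\<forall>(x, v)\<in>A. fitzpatrick_function A (x, v) = ereal (blinfun_apply v x)"
    by auto
  obtain x v where xv: "(x, v) \<in> A" using assms(2) by auto
  show "ext_proper (fitzpatrick_function A)"
    unfolding ext_proper_def
  proof
    show "\<forall>p. fitzpatrick_function A p \<noteq> -\<infinity>"
    proof
      fix p :: "'a \<times> ('a \<Rightarrow>\<^sub>L real)"
      show "fitzpatrick_function A p \<noteq> -\<infinity>"
        using fitzpatrick_function_ge[OF assms(1), of "snd p" "fst p"] by auto
    qed
    show "\<exists>p. fitzpatrick_function A p \<noteq> \<infinity>"
      using on_A[OF xv] by (intro exI[of _ "(x, v)"]) simp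
  qed
  show "ext_convex (fitzpatrick_function A)"
    unfolding fitzpatrick_function_def[abs_def]
    by (intro ext_convex_SUP ext_convex_affine linear_pairing_sum)
  show "ext_lsc (fitzpatrick_function A)"
    unfolding fitzpatrick_function_def[abs_def]
    by (intro ext_lsc_SUP ext_lsc_continuous continuous_intros)
  show "ereal (blinfun_apply v x) \<le> fitzpatrick_function A (x, v)" for x v
    by (rule fitzpatrick_function_ge[OF assms(1)])
qed

section \<open>Consequences of a unique Fitzpatrick function\<close>

locale unique_fitzpatrick =
  fixes f :: "'a::real_normed_vector \<Rightarrow> ereal"
  assumes proper: "ext_proper f" and convex: "ext_convex f" and lsc: "ext_lsc f"
    and unique: "\<exists>!h. h \<in> fitzpatrick_family (graph_subdiff f)"
    and graph_nonempty: "graph_subdiff f \<noteq> {}"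
begin

lemma neq_minf: "f x \<noteq> -\<infinity>"
  using ext_proper_neq_minf[OF proper] .

lemma fenchel_sum_in_fitzpatrick_family:
  "(\<lambda>p. f (fst p) + fenchel f (snd p)) \<in> fitzpatrick_family (graph_subdiff f)"
  using fitzpatrick_family_split_sum[OF proper graph_nonempty convex lsc neq_minf order_refl]
    fenchel_young[OF proper] by blast

lemma fitzpatrick_family_eq:
  "h \<in> fitzpatrick_family (graph_subdiff f) \<Longrightarrow> h = (\<lambda>p. f (fst p) + fenchel f (snd p))"
  using unique fenchel_sum_in_fitzpatrick_family by blast

lemma fenchel_finite_somewhere:
  obtains w0 c where "fenchel f w0 = ereal c"
proof -
  obtain x w where "w \<in> subdiff f x"
    using graph_nonempty by (auto simp: graph_subdiff_def)
  then have "f x + fenchel f w = ereal (blinfun_apply w x)"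
    by (rule fenchel_subdiff[OF proper])
  then show ?thesis
    using that neq_minf[of x] fenchel_neq_minf[OF proper, of w] by (cases "f x"; cases "fenchel f w") auto
qed

lemma biconjugate_eq: "biconjugate f x = f x"
proof -
  obtain w0 c where c: "fenchel f w0 = ereal c"
    using fenchel_finite_somewhere .
  then have "biconjugate f y \<noteq> -\<infinity>" for y
    by (intro biconjugate_neq_minf[of f w0]) simp
  then have "(\<lambda>p. biconjugate f (fst p) + fenchel f (snd p)) = (\<lambda>p. f (fst p) + fenchel f (snd p))"
    using fitzpatrick_family_split_sum[OF proper graph_nonempty ext_convex_biconjugate ext_lsc_biconjugate
        _ biconjugate_le[OF proper] biconjugate_young]
    by (intro fitzpatrick_family_eq) blast
  then have "biconjugate f x + ereal c = f x + ereal c"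
    using c by (metis fst_conv snd_conv)
  then show ?thesis
    by (simp add: ereal_add_cancel_right)
qed

lemma subdiff_of_affine_minorant:
  assumes "\<And>x w. ereal (blinfun_apply w x0 + blinfun_apply u x - blinfun_apply u x0) \<le> f x + fenchel f w"
  shows "u \<in> subdiff f x0"
proof -
  have fenchel_le: "fenchel f u \<le> ereal (c - blinfun_apply w x0 + blinfun_apply u x0)"
    if c: "fenchel f w = ereal c" for w c
    unfolding fenchel_def
  proof (rule SUP_least)
    fix x
    show "ereal (blinfun_apply u x) - f x \<le> ereal (c - blinfun_apply w x0 + blinfun_apply u x0)"
      using assms[of w x] c neq_minf[of x] by (cases "f x") auto
  qed
  obtain b where b: "fenchel f u = ereal b"
  proof -
    obtain w0 c where "fenchel f w0 = ereal c"
      using fenchel_finite_somewhere .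
    then show ?thesis
      using that fenchel_le fenchel_neq_minf[OF proper, of u] by (cases "fenchel f u") auto
  qed
  have "f x0 \<le> ereal (blinfun_apply u x0 - b)"
    unfolding biconjugate_eq[of x0, symmetric] biconjugate_def
  proof (rule SUP_least)
    fix w
    show "ereal (blinfun_apply w x0) - fenchel f w \<le> ereal (blinfun_apply u x0 - b)"
      using fenchel_le[of w] b fenchel_neq_minf[OF proper, of w] by (cases "fenchel f w") auto
  qed
  then have "f x0 + fenchel f u \<le> ereal (blinfun_apply u x0)"
    using b neq_minf[of x0] by (cases "f x0") auto
  then show ?thesis
    using subdiff_iff_fenchel_young_eq[OF proper] by blast
qed

lemma maximal_monotone_subdiff: "maximal_monotone_graph (graph_subdiff f)"
  unfolding maximal_monotone_graph_def
proof (intro conjI allI impI)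
  show "monotone_graph (graph_subdiff f)"
    by (rule monotone_graph_subdiff[OF proper])
  fix x0 u0
  assume mono: "\<forall>(y, u)\<in>graph_subdiff f. 0 \<le> blinfun_apply (u0 - u) (x0 - y)"
  define g where "g p = ereal (blinfun_apply (snd p) x0 + blinfun_apply u0 (fst p) - blinfun_apply u0 x0)" for p
  have "\<forall>(y, u)\<in>graph_subdiff f. g (y, u) \<le> ereal (blinfun_apply u y)"
    using mono by (auto simp: g_def blinfun.diff_left blinfun.diff_right)
  then have "(\<lambda>p. max (f (fst p) + fenchel f (snd p)) (g p)) \<in> fitzpatrick_family (graph_subdiff f)"
    unfolding g_def
    by (intro fitzpatrick_family_max fenchel_sum_in_fitzpatrick_family graph_nonempty
        ext_convex_affine linear_pairing_sum ext_lsc_continuous continuous_intros)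
  then have "(\<lambda>p. max (f (fst p) + fenchel f (snd p)) (g p)) = (\<lambda>p. f (fst p) + fenchel f (snd p))"
    by (rule fitzpatrick_family_eq)
  then have "g (x, w) \<le> f x + fenchel f w" for x w
    by (metis fst_conv snd_conv max.cobounded2)
  then show "(x0, u0) \<in> graph_subdiff f"
    using subdiff_of_affine_minorant by (simp add: g_def graph_subdiff_def)
qed

lemma fitzpatrick_function_eq:
  "fitzpatrick_function (graph_subdiff f) p = f (fst p) + fenchel f (snd p)"
  using fitzpatrick_family_eq[OF fitzpatrick_function_in_family[OF maximal_monotone_subdiff graph_nonempty]]
  by simp

lemma approx_subgradient_pair:
  assumes "f x = ereal \<alpha>" "fenchel f v = ereal a" "0 < \<epsilon>"
  obtains y u \<beta> where "u \<in> subdiff f y" "f y = ereal \<beta>" "a - \<epsilon> < blinfun_apply v y - \<beta>"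
    "\<And>x'. f x + ereal (blinfun_apply u (x' - x) - \<epsilon>) \<le> f x'"
proof -
  have "ereal (\<alpha> + a - \<epsilon>) < fitzpatrick_function (graph_subdiff f) (x, v)"
    using assms by (simp add: fitzpatrick_function_eq)
  then obtain y u where u: "u \<in> subdiff f y"
    and gap: "\<alpha> + a - \<epsilon> < blinfun_apply v y + blinfun_apply u x - blinfun_apply u y"
    unfolding fitzpatrick_function_def graph_subdiff_def by (auto simp: less_SUP_iff)
  obtain \<beta> where \<beta>: "f y = ereal \<beta>"
    using subdiff_finite[OF proper u] .
  have u_sub: "ereal (\<beta> + blinfun_apply u (x' - y)) \<le> f x'" for x'
    using u subdiff_iff[of f, OF \<beta>] by blast
  have v_bound: "blinfun_apply v y - \<beta> \<le> a"
    using fenchel_ge[of v y f] assms(2) \<beta> by simp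
  have "blinfun_apply u (x - y) \<le> \<alpha> - \<beta>"
    using u_sub[of x] assms(1) by simp
  then have "a - \<epsilon> < blinfun_apply v y - \<beta>"
    using gap by (simp add: blinfun.diff_right)
  moreover have "f x + ereal (blinfun_apply u (x' - x) - \<epsilon>) \<le> f x'" for x'
  proof (rule order_trans[OF _ u_sub[of x']])
    show "f x + ereal (blinfun_apply u (x' - x) - \<epsilon>) \<le> ereal (\<beta> + blinfun_apply u (x' - y))"
      using gap v_bound assms(1) by (simp add: blinfun.diff_right)
  qed
  ultimately show ?thesis
    using that[OF u \<beta>] by blast
qed

lemma subdiff_at_fenchel_grad:
  assumes "frechet_grad_at (fenchel f) v z"
  shows "v \<in> subdiff f z"
proof -
  obtain a where a: "fenchel f v = ereal a"
    using frechet_grad_at_finite[OF assms] .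
  have "f z \<le> ereal (blinfun_apply v z - a)"
    unfolding biconjugate_eq[of z, symmetric] biconjugate_def
  proof (rule SUP_least)
    fix w
    have "ereal (a + blinfun_apply (w - v) z) \<le> fenchel f w"
      by (rule ext_convex_frechet_grad_subgradient[OF ext_convex_fenchel fenchel_neq_minf[OF proper] assms a])
    then show "ereal (blinfun_apply w z) - fenchel f w \<le> ereal (blinfun_apply v z - a)"
      by (cases "fenchel f w") (auto simp: blinfun.diff_left)
  qed
  then have "f z + fenchel f v \<le> ereal (blinfun_apply v z)"
    using a neq_minf[of z] by (cases "f z") auto
  then show ?thesis
    using subdiff_iff_fenchel_young_eq[OF proper] by blast
qed

end

section \<open>Subgradients at gradients of the conjugate\<close>

locale unique_fitzpatrick_banach = unique_fitzpatrick f for f :: "'a::banach \<Rightarrow> ereal"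
begin

lemma approx_subgradient_toward_grad:
  assumes "x \<in> interior (dom_ext f)" "frechet_grad_at (fenchel f) v z" "\<kappa> > 0"
  obtains u where "\<And>y. f x + ereal (blinfun_apply u (y - x) - \<kappa>) \<le> f y"
    "f z \<le> f x + ereal (blinfun_apply u (z - x) + \<kappa>)"
proof -
  have "x \<in> dom_ext f"
    using assms(1) interior_subset by blast
  then obtain \<alpha> where \<alpha>: "f x = ereal \<alpha>"
    using neq_minf[of x] by (cases "f x") (auto simp: dom_ext_def)
  obtain B where B: "B \<ge> 0"
    "\<And>u \<epsilon>. \<epsilon> \<le> 1 \<Longrightarrow> (\<And>y. f x + ereal (blinfun_apply u (y - x) - \<epsilon>) \<le> f y) \<Longrightarrow> norm u \<le> B"
    using approx_subgradients_bounded_at_interior[OF convex lsc assms(1) neq_minf] by metis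
  obtain a where a: "fenchel f v = ereal a"
    using frechet_grad_at_finite[OF assms(2)] .
  have "B + norm v \<ge> 0"
    using B(1) by simp
  then obtain \<epsilon>0 where \<epsilon>0: "\<epsilon>0 > 0" "\<And>y \<beta> d. f y = ereal \<beta> \<Longrightarrow> a - \<epsilon>0 < blinfun_apply v y - \<beta> \<Longrightarrow>
      norm d \<le> B + norm v \<Longrightarrow> blinfun_apply d (y - z) \<le> \<kappa>"
    using fenchel_grad_near_maximizer[OF assms(2) a assms(3)] by metis
  define \<epsilon> where "\<epsilon> = min \<epsilon>0 (min 1 \<kappa>)"
  have \<epsilon>: "0 < \<epsilon>" "\<epsilon> \<le> \<epsilon>0" "\<epsilon> \<le> 1" "\<epsilon> \<le> \<kappa>"
    using \<epsilon>0(1) assms(3) by (auto simp: \<epsilon>_def)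
  obtain u y \<beta> where u: "u \<in> subdiff f y" and \<beta>: "f y = ereal \<beta>"
    and near: "a - \<epsilon> < blinfun_apply v y - \<beta>"
    and approx: "\<And>x'. f x + ereal (blinfun_apply u (x' - x) - \<epsilon>) \<le> f x'"
    using approx_subgradient_pair[OF \<alpha> a \<epsilon>(1)] by metis
  have "norm (u - v) \<le> B + norm v"
    using B(2)[OF \<epsilon>(3) approx] norm_triangle_ineq4[of u v] by linarith
  moreover have "a - \<epsilon>0 < blinfun_apply v y - \<beta>"
    using near \<epsilon>(2) by linarith
  ultimately have "blinfun_apply (u - v) (y - z) \<le> \<kappa>"
    using \<epsilon>0(2)[OF \<beta>] by blast
  then have "f x + ereal (blinfun_apply u (z - x) + blinfun_apply (u - v) (y - z))
      \<le> f x + ereal (blinfun_apply u (z - x) + \<kappa>)"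
    by (intro add_left_mono) simp
  with subdiff_cross_estimate[OF proper u subdiff_at_fenchel_grad[OF assms(2)], of x]
  have "f z \<le> f x + ereal (blinfun_apply u (z - x) + \<kappa>)"
    by (rule order_trans)
  moreover have "f x + ereal (blinfun_apply u (y' - x) - \<kappa>) \<le> f y'" for y'
    using \<epsilon>(4) by (intro order_trans[OF add_left_mono approx[of y']]) simp
  ultimately show ?thesis
    using that by blast
qed

(* At x = x0 - s (z - x0) the approximate subgradient u of approx_subgradient_toward_grad and the
   subgradient w at x0 satisfy s <u - w, z - x0> \<le> \<kappa>, which transfers the bound at x to x0. *)
lemma grad_below_tangent_approx:
  assumes "x \<in> interior (dom_ext f)" "w \<in> subdiff f x0" "frechet_grad_at (fenchel f) v z"
    and "s > 0" "x0 - x = s *\<^sub>R (z - x0)" "\<kappa> > 0"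
  shows "f z \<le> f x0 + ereal (blinfun_apply w (z - x0) + \<kappa> * (2 + 1 / s))"
proof -
  define d where "d = z - x0"
  obtain u where u1: "\<And>y. f x + ereal (blinfun_apply u (y - x) - \<kappa>) \<le> f y"
    and u2: "f z \<le> f x + ereal (blinfun_apply u (z - x) + \<kappa>)"
    using approx_subgradient_toward_grad[OF assms(1,3,6)] by metis
  obtain \<alpha>0 where \<alpha>0: "f x0 = ereal \<alpha>0"
    using subdiff_finite[OF proper assms(2)] .
  have "x \<in> dom_ext f"
    using assms(1) interior_subset by blast
  then obtain \<alpha> where \<alpha>: "f x = ereal \<alpha>"
    using neq_minf[of x] by (cases "f x") (auto simp: dom_ext_def)
  have wx: "ereal (\<alpha>0 + blinfun_apply w (x - x0)) \<le> f x"
    using assms(2) subdiff_iff[of f, OF \<alpha>0] by blast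
  have "x - x0 = - (s *\<^sub>R d)" "z - x = (1 + s) *\<^sub>R d"
    using assms(5) by (simp_all add: d_def algebra_simps)
  then have "\<alpha> + (s * blinfun_apply u d - \<kappa>) \<le> \<alpha>0" "\<alpha>0 - s * blinfun_apply w d \<le> \<alpha>"
    and zu: "f z \<le> ereal (\<alpha> + ((1 + s) * blinfun_apply u d + \<kappa>))"
    using u1[of x0] wx \<alpha> \<alpha>0 u2 assms(5)
    by (simp_all add: d_def blinfun.scaleR_right blinfun.minus_right)
  then have "s * (blinfun_apply u d - blinfun_apply w d) \<le> \<kappa>"
    by (simp add: algebra_simps)
  then have "blinfun_apply u d - blinfun_apply w d \<le> \<kappa> / s"
    using assms(4) by (simp add: pos_le_divide_eq mult.commute)
  then have "\<alpha> + ((1 + s) * blinfun_apply u d + \<kappa>) \<le> \<alpha>0 + (blinfun_apply w d + \<kappa> * (2 + 1 / s))"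
    using \<open>\<alpha> + (s * blinfun_apply u d - \<kappa>) \<le> \<alpha>0\<close> by (simp add: algebra_simps)
  then show ?thesis
    using zu \<alpha>0 by (simp add: d_def order_trans)
qed

lemma grad_below_tangent:
  assumes "x0 \<in> interior (dom_ext f)" "w \<in> subdiff f x0" "frechet_grad_at (fenchel f) v z"
  shows "f z \<le> f x0 + ereal (blinfun_apply w (z - x0))"
proof -
  obtain r where r: "r > 0" "ball x0 r \<subseteq> interior (dom_ext f)"
    using assms(1) open_interior open_contains_ball by blast
  define D where "D = norm (z - x0) + 1"
  define s where "s = r / (2 * D)"
  have "D > 0"
    unfolding D_def by (smt (verit) norm_ge_zero)
  then have "s * D = r / 2" "s > 0"
    using r(1) by (simp_all add: s_def)
  then have "s * norm (z - x0) + s = r / 2" "s > 0"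
    by (simp_all add: D_def distrib_left)
  then have s: "s > 0" "s * norm (z - x0) < r"
    using r(1) by linarith+
  then have x: "x0 - s *\<^sub>R (z - x0) \<in> interior (dom_ext f)"
    using r(2) by (auto simp: dist_norm)
  obtain \<alpha>0 where \<alpha>0: "f x0 = ereal \<alpha>0"
    using subdiff_finite[OF proper assms(2)] .
  define C where "C = 2 + 1 / s"
  have C: "C > 0"
    using s(1) by (simp add: C_def add_pos_pos)
  have estimate: "f z \<le> ereal (\<alpha>0 + blinfun_apply w (z - x0) + \<kappa> * C)" if "\<kappa> > 0" for \<kappa>
    using grad_below_tangent_approx[OF x assms(2,3) s(1) _ that] \<alpha>0 by (simp add: C_def add.assoc)
  obtain c where c: "f z = ereal c"
    using estimate[of 1] neq_minf[of z] by (cases "f z") auto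
  have "c \<le> \<alpha>0 + blinfun_apply w (z - x0)"
  proof (rule field_le_epsilon)
    fix e :: real assume "e > 0"
    then show "c \<le> \<alpha>0 + blinfun_apply w (z - x0) + e"
      using estimate[of "e / C"] c C by simp
  qed
  then show ?thesis
    using c \<alpha>0 by simp
qed

lemma subdiff_interior_subset_subdiff_grad:
  assumes "x0 \<in> interior (dom_ext f)" "frechet_grad_at (fenchel f) v z"
  shows "subdiff f x0 \<subseteq> subdiff f z"
  using subdiff_of_le_tangent[OF proper] grad_below_tangent[OF assms(1) _ assms(2)] by blast

abbreviation grad_hull :: "'a set" where
  "grad_hull \<equiv> closure (convex hull (im_Dconj f))"

abbreviation subgradient_hull :: "('a \<Rightarrow>\<^sub>L real) set" where
  "subgradient_hull \<equiv> weak_star_closed_convex_hull (\<Union>x \<in> interior (dom_ext f). subdiff f x)"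

lemma subgradient_hull_subset_subdiff_grad:
  assumes "z \<in> im_Dconj f"
  shows "subgradient_hull \<subseteq> subdiff f z"
proof (rule weak_star_closed_convex_hull_minimal[OF _ convex_subdiff closedin_weak_star_subdiff])
  obtain v where "frechet_grad_at (fenchel f) v z"
    using assms unfolding im_Dconj_def by blast
  then show "(\<Union>x \<in> interior (dom_ext f). subdiff f x) \<subseteq> subdiff f z"
    using subdiff_interior_subset_subdiff_grad by blast
qed

context
  assumes zero_in_subgradient_hull: "0 \<in> subgradient_hull"
begin

lemma grad_in_argmin:
  assumes "z \<in> im_Dconj f"
  shows "z \<in> argmin_ext f"
proof -
  have "0 \<in> subdiff f z"
    using subgradient_hull_subset_subdiff_grad[OF assms] zero_in_subgradient_hull by blast
  then show ?thesis
    by (simp add: subdiff_def argmin_ext_def)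
qed

lemma grad_hull_subset_argmin: "grad_hull \<subseteq> argmin_ext f"
  using grad_in_argmin convex_argmin_ext[OF proper convex] closed_argmin_ext[OF proper lsc]
  by (intro closure_minimal hull_minimal) auto

lemma subgradient_hull_const_on_grad_hull:
  assumes "w \<in> subgradient_hull" "z \<in> im_Dconj f" "k \<in> grad_hull"
  shows "blinfun_apply w k = blinfun_apply w z"
proof (rule blinfun_eq_on_closure_convex_hull[OF _ assms(3)])
  fix z' assume z': "z' \<in> im_Dconj f"
  have "f z' \<le> f z" "f z \<le> f z'"
    using grad_in_argmin[OF z'] grad_in_argmin[OF assms(2)] unfolding argmin_ext_def by blast+
  then have "f z' = f z"
    by (rule antisym)
  moreover have "f z' = f z + ereal (blinfun_apply w (z' - z))"
    using assms(1) subgradient_hull_subset_subdiff_grad[OF z'] subgradient_hull_subset_subdiff_grad[OF assms(2)]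
    by (intro subdiff_common_eq[OF proper]) auto
  ultimately have "f z + ereal (blinfun_apply w (z' - z)) = f z"
    by metis
  moreover obtain c where "f z = ereal c"
    using argmin_ext_finite[OF proper grad_in_argmin[OF assms(2)]] .
  ultimately have "blinfun_apply w (z' - z) = 0"
    by simp
  then show "blinfun_apply w z' = blinfun_apply w z"
    by (simp add: blinfun.diff_right)
qed

lemma subgradient_hull_orthogonal_grad_hull:
  assumes "w \<in> subgradient_hull" "k1 \<in> grad_hull" "k2 \<in> grad_hull"
  shows "blinfun_apply w (k1 - k2) = 0"
proof -
  have "im_Dconj f \<noteq> {}"
    using assms(2) by auto
  then obtain z where "z \<in> im_Dconj f"
    by blast
  then show ?thesis
    using subgradient_hull_const_on_grad_hull[OF assms(1)] assms(2,3) by (simp add: blinfun.diff_right)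
qed

lemma value_on_interior:
  assumes "x \<in> interior (dom_ext f)" "w \<in> subdiff f x" "k \<in> grad_hull"
  shows "f x = ereal (blinfun_apply w (x - k)) + (INF y. f y)"
proof -
  have "im_Dconj f \<noteq> {}"
    using assms(3) by auto
  then obtain z where z: "z \<in> im_Dconj f"
    by blast
  have "w \<in> subgradient_hull"
    using assms(1,2) unfolding weak_star_closed_convex_hull_def by (blast intro: hull_inc)
  then have "f z = f x + ereal (blinfun_apply w (z - x))" "blinfun_apply w k = blinfun_apply w z"
    using subdiff_common_eq[OF proper assms(2)] subgradient_hull_subset_subdiff_grad[OF z]
      subgradient_hull_const_on_grad_hull[OF _ z assms(3)] by auto
  moreover have "(INF y. f y) = f z"
    using INF_eq_argmin_ext[OF grad_in_argmin[OF z]] .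
  moreover obtain a where "f x = ereal a"
    using subdiff_finite[OF proper assms(2)] .
  ultimately show ?thesis
    by (simp add: blinfun.diff_right)
qed

end

end

theorem proposition4p4:
  fixes f :: "'a::banach \<Rightarrow> ereal"
  assumes "ext_proper f" and "ext_convex f" and "ext_lsc f"
    and "\<exists>!h. h \<in> fitzpatrick_family (graph_subdiff f)"
    and "0 \<in> weak_star_closed_convex_hull (\<Union>x \<in> interior (dom_ext f). subdiff f x)"
    and "dom_Dconj f \<noteq> {}"
  shows "closure (convex hull (im_Dconj f)) \<subseteq> argmin_ext f
      \<and> argmin_ext f \<subseteq> dom_ext f
      \<and> (\<forall>k1 \<in> closure (convex hull (im_Dconj f)). \<forall>k2 \<in> closure (convex hull (im_Dconj f)).
           \<forall>v \<in> weak_star_closed_convex_hull (\<Union>x \<in> interior (dom_ext f). subdiff f x).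
             blinfun_apply v (k1 - k2) = 0)
      \<and> (\<forall>x \<in> interior (dom_ext f). \<forall>xs \<in> subdiff f x. \<forall>xh \<in> closure (convex hull (im_Dconj f)).
           f x = ereal (blinfun_apply xs (x - xh)) + (INF y. f y))"
proof -
  have "(\<Union>x \<in> interior (dom_ext f). subdiff f x) \<noteq> {}"
  proof
    assume "(\<Union>x \<in> interior (dom_ext f). subdiff f x) = {}"
    then show False
      using assms(5) by (simp add: weak_star_closed_convex_hull_empty)
  qed
  then have "graph_subdiff f \<noteq> {}"
    by (auto simp: graph_subdiff_def)
  then interpret unique_fitzpatrick_banach f
    using assms(1-4) by unfold_locales
  show ?thesis
    using grad_hull_subset_argmin[OF assms(5)] argmin_ext_subset_dom[OF proper]
      subgradient_hull_orthogonal_grad_hull[OF assms(5)] value_on_interior[OF assms(5)]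
    by simp
qed

end
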